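(* Let $A\in M_n(R)$ be a definite matrix. Then $A^{\nabla}\cong_\nu A^*\cong_\nu A^{n-1}$, where $A^*=\sum_{i\geq 0}A^i$ is the Kleene star of $A$.
   Context: Supertropical semiring $R=T\cup G\cup\{-\infty\}$: $T=\mathcal G$ an ordered abelian group (tangible), $G=\{a^\nu\}$ a copy (ghost); $a+b$ is the element of larger $\nu$-value if the $\nu$-values differ and $a^\nu$ if equal; multiplication adds $\nu$-values, is ghost if a factor is ghost, $-\infty$ absorbing; $0_R=-\infty$, $1_R=0$. Matrix operations use these operations; $A^0=I$ (identity: $1_R$ on diagonal, $0_R$ off it). $A\cong_\nu B$ means entrywise equality of $\nu$-values. $\det(A)=\sum_{\sigma\in S_n}\prod_i a_{i,\sigma(i)}$; $\operatorname{adj}(A)_{i,j}=\det(A_{j,i})$ (minor deleting row $j$, column $i$); $A^\nabla=\det(A)^{-1}\operatorname{adj}(A)$ when $\det(A)\in T$. A matrix is definite if all diagonal entries are $1_R$ and $\det(A)=1_R$. *)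

theory Defs
  imports Main "HOL-Combinatorics.Permutations"
begin

text \<open>Elements: the zero NegInf (standing for minus infinity), tangible elements Tan a,
  and ghost elements Gh a (a^nu), for a in the ordered abelian group 'g.\<close>

datatype 'g st = NegInf | Tan 'g | Gh 'g

fun sval :: "'g::linordered_ab_group_add st \<Rightarrow> 'g" where
  "sval NegInf = 0" | "sval (Tan a) = a" | "sval (Gh a) = a"

fun nu :: "'g st \<Rightarrow> 'g option" where
  "nu NegInf = None" | "nu (Tan a) = Some a" | "nu (Gh a) = Some a"

fun st_add :: "'g::linordered_ab_group_add st \<Rightarrow> 'g st \<Rightarrow> 'g st" where
  "st_add NegInf y = y"
| "st_add x NegInf = x"
| "st_add x y = (if sval x < sval y then y else if sval y < sval x then x else Gh (sval x))"

fun st_mul :: "'g::linordered_ab_group_add st \<Rightarrow> 'g st \<Rightarrow> 'g st" where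
  "st_mul NegInf y = NegInf"
| "st_mul x NegInf = NegInf"
| "st_mul (Tan a) (Tan b) = Tan (a + b)"
| "st_mul x y = Gh (sval x + sval y)"

instantiation st :: (linordered_ab_group_add) comm_monoid_add
begin
definition zero_st_def: "0 = NegInf"
definition plus_st_def: "x + y = st_add x y"
instance
proof
  fix a b c :: "'a st"
  show "a + b + c = a + (b + c)"
    unfolding plus_st_def by (cases a; cases b; cases c) auto
  show "a + b = b + a"
    unfolding plus_st_def by (cases a; cases b) auto
  show "0 + a = a"
    unfolding plus_st_def zero_st_def by simp
qed
end

instantiation st :: (linordered_ab_group_add) comm_monoid_mult
begin
definition one_st_def: "1 = Tan 0"
definition times_st_def: "x * y = st_mul x y"
instance
proof
  fix a b c :: "'a st"
  show "a * b * c = a * (b * c)"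
    unfolding times_st_def by (cases a; cases b; cases c) (auto simp: add.assoc)
  show "a * b = b * a"
    unfolding times_st_def by (cases a; cases b) (auto simp: add.commute)
  show "1 * a = a"
    unfolding times_st_def one_st_def by (cases a) auto
qed
end

text \<open>Inverse of a tangible element (only used for tangible arguments).\<close>
fun st_inv :: "'g::linordered_ab_group_add st \<Rightarrow> 'g st" where
  "st_inv (Tan a) = Tan (- a)"
| "st_inv x = x"

text \<open>A matrix of size n is a function nat => nat => 'g st; only the entries with
  indices below n are meaningful (indices are 0, ..., n-1).\<close>

type_synonym 'g smat = "nat \<Rightarrow> nat \<Rightarrow> 'g st"

definition smat_id :: "'g::linordered_ab_group_add smat" where
  "smat_id = (\<lambda>i j. if i = j then 1 else 0)"

definition smat_mult :: "nat \<Rightarrow> 'g::linordered_ab_group_add smat \<Rightarrow> 'g smat \<Rightarrow> 'g smat" where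
  "smat_mult n A B = (\<lambda>i j. \<Sum>k<n. A i k * B k j)"

definition smat_add :: "'g::linordered_ab_group_add smat \<Rightarrow> 'g smat \<Rightarrow> 'g smat" where
  "smat_add A B = (\<lambda>i j. A i j + B i j)"

fun smat_pow :: "nat \<Rightarrow> 'g::linordered_ab_group_add smat \<Rightarrow> nat \<Rightarrow> 'g smat" where
  "smat_pow n A 0 = smat_id"
| "smat_pow n A (Suc k) = smat_mult n (smat_pow n A k) A"

definition sdet :: "nat \<Rightarrow> 'g::linordered_ab_group_add smat \<Rightarrow> 'g st" where
  "sdet n A = (\<Sum>\<sigma> | \<sigma> permutes {..<n}. \<Prod>i<n. A i (\<sigma> i))"

definition sminor :: "'g smat \<Rightarrow> nat \<Rightarrow> nat \<Rightarrow> 'g smat" where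
  "sminor A j i = (\<lambda>r c. A (if r < j then r else Suc r) (if c < i then c else Suc c))"

definition sadj :: "nat \<Rightarrow> 'g::linordered_ab_group_add smat \<Rightarrow> 'g smat" where
  "sadj n A = (\<lambda>i j. sdet (n - 1) (sminor A j i))"

text \<open>A^nabla = det(A)^{-1} adj(A) (meaningful when det A is tangible).\<close>
definition snabla :: "nat \<Rightarrow> 'g::linordered_ab_group_add smat \<Rightarrow> 'g smat" where
  "snabla n A = (\<lambda>i j. st_inv (sdet n A) * sadj n A i j)"

definition tangible :: "'g st \<Rightarrow> bool" where
  "tangible x \<longleftrightarrow> (\<exists>a. x = Tan a)"

definition definite :: "nat \<Rightarrow> 'g::linordered_ab_group_add smat \<Rightarrow> bool" where
  "definite n A \<longleftrightarrow> (\<forall>i<n. A i i = 1) \<and> sdet n A = 1"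

text \<open>Kleene star A^* = sum_{i >= 0} A^i; the infinite sum is taken entrywise as the
  eventual value of the partial sums sum_{i<m} A^i.\<close>
definition kleene_star :: "nat \<Rightarrow> 'g::linordered_ab_group_add smat \<Rightarrow> 'g smat" where
  "kleene_star n A = (\<lambda>i j. THE x. \<exists>N. \<forall>m\<ge>N. (\<Sum>k<m. smat_pow n A k i j) = x)"

definition nu_equiv :: "nat \<Rightarrow> 'g smat \<Rightarrow> 'g smat \<Rightarrow> bool" where
  "nu_equiv n A B \<longleftrightarrow> (\<forall>i<n. \<forall>j<n. nu (A i j) = nu (B i j))"

end

theory Submission
  imports Defs "HOL-Library.Option_ord" "HOL-Combinatorics.Cycles"
begin

(* A definite matrix A has unit diagonal and det A = 1, so every permutation
   term (prod r<n. A r (sigma r)) has nu-value at most 0.  We work throughout with nu-values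
   in the option type (None, the value of -infinity, is the bottom element) and read
   entries of A as arc weights of a digraph on {0..n-1}.
   (1) nu (A^k) i j is the largest nu-weight of a walk with k steps from i to j, and it is
       monotone in k because the diagonal is 1.
   (2) A simple cycle extends by the identity to a permutation, so its weight is <= 0; by
       cutting off closed subwalks every closed walk has weight <= 0, and every walk from
       i to j is bounded by a simple path from i to j.  A simple path extends to a
       permutation sigma with sigma j = i, so its weight is bounded by nu (adj A) i j.
   (3) Conversely each term of (adj A) i j comes from a permutation sigma with sigma j = i;
       its orbit through i is a simple path from i to j with at most n-1 steps, and the
       remaining factors form a permutation term of value <= 0.
   Hence nu (A^k) i j = nu (adj A) i j for all k >= n-1, the partial sums of the Kleene
   star stabilise at the ghost of this value, and A^nabla = adj A because det A = 1. *)

fun nu_mult :: "'g::linordered_ab_group_add option \<Rightarrow> 'g option \<Rightarrow> 'g option" where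
  "nu_mult (Some a) (Some b) = Some (a + b)"
| "nu_mult _ _ = None"

lemma nu_plus: "nu (x + y) = max (nu x) (nu y)"
  for x y :: "'g::linordered_ab_group_add st"
  unfolding plus_st_def by (cases x; cases y) (auto simp: max_def)

lemma nu_times: "nu (x * y) = nu_mult (nu x) (nu y)"
  for x y :: "'g::linordered_ab_group_add st"
  unfolding times_st_def by (cases x; cases y) auto

lemma nu_one [simp]: "nu (1::'g::linordered_ab_group_add st) = Some 0"
  by (simp add: one_st_def)

lemma nu_zero [simp]: "nu (0::'g::linordered_ab_group_add st) = None"
  by (simp add: zero_st_def)

lemma nu_mult_mono: "a \<le> a' \<Longrightarrow> b \<le> b' \<Longrightarrow> nu_mult a b \<le> nu_mult a' b'"
  for a :: "'g::linordered_ab_group_add option"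
  by (cases a; cases a'; cases b; cases b') (auto intro: add_mono)

lemma nu_mult_le_left: "b \<le> Some 0 \<Longrightarrow> nu_mult a b \<le> a"
  for a :: "'g::linordered_ab_group_add option"
  by (cases a; cases b) auto

lemma nu_sum_ge: "finite S \<Longrightarrow> s \<in> S \<Longrightarrow> nu (f s) \<le> nu (sum f S)"
  for f :: "'a \<Rightarrow> 'g::linordered_ab_group_add st"
  by (simp add: sum.remove nu_plus)

lemma nu_sum_le: "finite S \<Longrightarrow> (\<And>s. s \<in> S \<Longrightarrow> nu (f s) \<le> c) \<Longrightarrow> nu (sum f S) \<le> c"
  for f :: "'a \<Rightarrow> 'g::linordered_ab_group_add st"
  by (induction S rule: finite_induct) (auto simp: nu_plus)

lemma nu_sum_attained:
  "finite S \<Longrightarrow> nu (sum f S) = None \<or> (\<exists>s\<in>S. nu (sum f S) = nu (f s))"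
  for f :: "'a \<Rightarrow> 'g::linordered_ab_group_add st"
  by (induction S rule: finite_induct) (auto simp: nu_plus max_def)

definition ghost_of :: "'g option \<Rightarrow> 'g st" where
  "ghost_of v = (case v of None \<Rightarrow> NegInf | Some a \<Rightarrow> Gh a)"

lemma nu_ghost_of [simp]: "nu (ghost_of v) = v"
  by (cases v) (auto simp: ghost_of_def)

lemma add_same_nu: "nu y = v \<Longrightarrow> nu z = v \<Longrightarrow> y + z = ghost_of v"
  for y z :: "'g::linordered_ab_group_add st"
  unfolding plus_st_def ghost_of_def by (cases y; cases z) auto

lemma ghost_of_absorbs: "nu y \<le> v \<Longrightarrow> ghost_of v + y = ghost_of v"
  for y :: "'g::linordered_ab_group_add st"
  unfolding plus_st_def ghost_of_def by (cases y; cases v) auto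

lemma sum_eventually_ghost:
  fixes f :: "nat \<Rightarrow> 'g::linordered_ab_group_add st"
  assumes below: "\<And>k. k < N \<Longrightarrow> nu (f k) \<le> v" and const: "\<And>k. N \<le> k \<Longrightarrow> nu (f k) = v"
    and m: "N + 2 \<le> m"
  shows "(\<Sum>k<m. f k) = ghost_of v"
  using m
proof (induction m rule: dec_induct)
  case base
  have "(\<Sum>k<N + 2. f k) = (f N + f (Suc N)) + (\<Sum>k<N. f k)"
    by (simp add: ac_simps)
  also have "f N + f (Suc N) = ghost_of v"
    by (rule add_same_nu) (simp_all add: const)
  also have "ghost_of v + (\<Sum>k<N. f k) = ghost_of v"
    by (rule ghost_of_absorbs, rule nu_sum_le) (simp_all add: below)
  finally show ?case .
next
  case (step m)
  then show ?case by (simp add: ghost_of_absorbs const)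
qed

lemma kleene_star_entry_eq:
  assumes "\<And>m. N \<le> m \<Longrightarrow> (\<Sum>k<m. smat_pow n A k i j) = c"
  shows "kleene_star n A i j = c"
  unfolding kleene_star_def
proof (rule the_equality)
  show "\<exists>N. \<forall>m\<ge>N. (\<Sum>k<m. smat_pow n A k i j) = c"
    using assms by blast
next
  fix x assume "\<exists>N'. \<forall>m\<ge>N'. (\<Sum>k<m. smat_pow n A k i j) = x"
  then obtain N' where "\<forall>m\<ge>N'. (\<Sum>k<m. smat_pow n A k i j) = x" by blast
  then show "x = c" using assms[of "max N N'"] by simp
qed

section \<open>Walks and matrix powers\<close>

fun walk_weight :: "'g::linordered_ab_group_add smat \<Rightarrow> nat list \<Rightarrow> 'g st" where
  "walk_weight A (x # y # r) = A x y * walk_weight A (y # r)"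
| "walk_weight A _ = 1"

lemma walk_weight_append:
  "walk_weight A (xs @ v # ys) = walk_weight A (xs @ [v]) * walk_weight A (v # ys)"
proof (induction xs)
  case Nil show ?case by simp
next
  case (Cons x xs) then show ?case by (cases xs) (auto simp: mult.assoc)
qed

lemma walk_weight_snoc:
  assumes "xs \<noteq> []"
  shows "walk_weight A (xs @ [z]) = walk_weight A xs * A (last xs) z"
proof -
  obtain ys y where xs: "xs = ys @ [y]" using assms by (metis rev_exhaust)
  show ?thesis using walk_weight_append[of A ys y "[z]"] by (simp add: xs)
qed

lemma walk_weight_cut:
  "walk_weight A (xs @ [y] @ ys @ [y] @ zs)
     = walk_weight A (xs @ [y] @ zs) * walk_weight A (y # ys @ [y])"
proof -
  have "walk_weight A (xs @ [y] @ ys @ [y] @ zs)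
      = walk_weight A (xs @ [y]) * (walk_weight A (y # ys @ [y]) * walk_weight A (y # zs))"
    using walk_weight_append[of A xs y "ys @ y # zs"] walk_weight_append[of A "y # ys" y zs]
    by simp
  also have "\<dots> = walk_weight A (xs @ [y] @ zs) * walk_weight A (y # ys @ [y])"
    using walk_weight_append[of A xs y zs] by (simp add: ac_simps)
  finally show ?thesis .
qed

lemma pow_entry_mono:
  assumes diag: "\<forall>r<n. A r r = 1" and ij: "i < n" "j < n" and "k \<le> k'"
  shows "nu (smat_pow n A k i j) \<le> nu (smat_pow n A k' i j)"
proof -
  have "nu (smat_pow n A k i j) \<le> nu (smat_pow n A (Suc k) i j)" for k
  proof -
    have "nu (smat_pow n A k i j * A j j) \<le> nu (\<Sum>l<n. smat_pow n A k i l * A l j)"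
      by (rule nu_sum_ge[where f="\<lambda>l. smat_pow n A k i l * A l j"]) (use ij in auto)
    then show ?thesis using diag ij by (simp add: smat_mult_def)
  qed
  then show ?thesis using lift_Suc_mono_le[of "\<lambda>k. nu (smat_pow n A k i j)"] \<open>k \<le> k'\<close>
    by blast
qed

lemma walk_weight_le_pow:
  "vs \<noteq> [] \<Longrightarrow> set vs \<subseteq> {..<n} \<Longrightarrow>
   nu (walk_weight A vs) \<le> nu (smat_pow n A (length vs - 1) (hd vs) (last vs))"
proof (induction vs rule: rev_induct)
  case Nil then show ?case by simp
next
  case (snoc z xs)
  show ?case
  proof (cases "xs = []")
    case True then show ?thesis by (simp add: smat_id_def)
  next
    case False
    let ?P = "smat_pow n A (length xs - 1) (hd xs)"
    have IH: "nu (walk_weight A xs) \<le> nu (?P (last xs))"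
      using snoc False by auto
    have last_lt: "last xs < n" using snoc False last_in_set by auto
    have "nu (walk_weight A (xs @ [z])) = nu_mult (nu (walk_weight A xs)) (nu (A (last xs) z))"
      using False by (simp add: walk_weight_snoc nu_times)
    also have "\<dots> \<le> nu (?P (last xs) * A (last xs) z)"
      unfolding nu_times by (rule nu_mult_mono[OF IH order_refl])
    also have "\<dots> \<le> nu (\<Sum>l<n. ?P l * A l z)"
      by (rule nu_sum_ge[where f="\<lambda>l. ?P l * A l z"]) (use last_lt in auto)
    also have "\<dots> = nu (smat_pow n A (length (xs @ [z]) - 1) (hd (xs @ [z])) (last (xs @ [z])))"
      using False by (cases xs) (auto simp: smat_mult_def)
    finally show ?thesis .
  qed
qed

lemma pow_entry_le_walk:
  assumes "i < n" "j < n"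
  shows "\<exists>vs. vs \<noteq> [] \<and> set vs \<subseteq> {..<n} \<and> hd vs = i \<and> last vs = j
              \<and> nu (smat_pow n A k i j) \<le> nu (walk_weight A vs)"
  using assms(2)
proof (induction k arbitrary: j)
  case 0
  show ?case
  proof (cases "i = j")
    case True then show ?thesis using assms by (auto simp: smat_id_def intro!: exI[of _ "[i]"])
  next
    case False then show ?thesis using assms 0
      by (auto simp: smat_id_def zero_st_def intro!: exI[of _ "[i, j]"])
  qed
next
  case (Suc k)
  let ?t = "\<lambda>l. smat_pow n A k i l * A l j"
  from nu_sum_attained[where S="{..<n}" and f="?t", OF finite_lessThan] show ?case
  proof (elim disjE bexE)
    assume "nu (\<Sum>l<n. ?t l) = None"
    then show ?case using assms Suc.prems by (auto simp: smat_mult_def intro!: exI[of _ "[i, j]"])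
  next
    fix l assume l: "l \<in> {..<n}" and eq: "nu (\<Sum>l<n. ?t l) = nu (?t l)"
    obtain vs where vs: "vs \<noteq> []" "set vs \<subseteq> {..<n}" "hd vs = i" "last vs = l"
      "nu (smat_pow n A k i l) \<le> nu (walk_weight A vs)"
      using Suc.IH[of l] l by auto
    have "nu (smat_pow n A (Suc k) i j) \<le> nu_mult (nu (walk_weight A vs)) (nu (A l j))"
      using eq nu_mult_mono[OF vs(5) order_refl] by (simp add: smat_mult_def nu_times)
    also have "\<dots> = nu (walk_weight A (vs @ [j]))"
      using vs by (simp add: walk_weight_snoc nu_times)
    finally show ?case using vs Suc.prems by (intro exI[of _ "vs @ [j]"]) auto
  qed
qed

section \<open>Terms of the adjugate\<close>

definition skip :: "nat \<Rightarrow> nat \<Rightarrow> nat" where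
  "skip k c = (if c < k then c else Suc c)"

definition unskip :: "nat \<Rightarrow> nat \<Rightarrow> nat" where
  "unskip k r = (if r < k then r else r - 1)"

lemma sminor_skip: "sminor A j i c d = A (skip j c) (skip i d)"
  by (simp add: sminor_def skip_def)

lemma skip_neq [simp]: "skip k c \<noteq> k" "k \<noteq> skip k c"
  by (simp_all add: skip_def)

lemma unskip_skip [simp]: "unskip k (skip k c) = c"
  by (simp add: skip_def unskip_def)

lemma skip_unskip: "r \<noteq> k \<Longrightarrow> skip k (unskip k r) = r"
  by (auto simp: skip_def unskip_def)

lemma skip_inj: "inj_on (skip k) X"
  by (auto simp: inj_on_def skip_def split: if_splits)

lemma skip_image: "j < n \<Longrightarrow> skip j ` {..<n-1} = {..<n} - {j}"
proof
  show "skip j ` {..<n-1} \<subseteq> {..<n} - {j}" if "j < n" using that by (auto simp: skip_def)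
  show "{..<n} - {j} \<subseteq> skip j ` {..<n-1}" if "j < n"
  proof
    fix r assume "r \<in> {..<n} - {j}"
    then have "r = skip j (unskip j r)" "unskip j r \<in> {..<n-1}"
      using that by (auto simp: skip_def unskip_def)
    then show "r \<in> skip j ` {..<n-1}" by blast
  qed
qed

lemma prod_reindex_skip: "j < n \<Longrightarrow> (\<Prod>r\<in>{..<n}-{j}. g r) = (\<Prod>c<n-1. g (skip j c))"
  for g :: "nat \<Rightarrow> 'a::comm_monoid_mult"
  using prod.reindex[OF skip_inj[of j "{..<n-1}"], of g] skip_image[of j n] by simp

lemma minor_perm_of_perm:
  assumes ij: "i < n" "j < n" and sigma: "\<sigma> permutes {..<n}" "\<sigma> j = i"
  obtains \<tau> where "\<tau> permutes {..<n-1}" "\<And>c. c < n-1 \<Longrightarrow> \<sigma> (skip j c) = skip i (\<tau> c)"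
proof
  define \<tau> where "\<tau> = (\<lambda>c. if c < n-1 then unskip i (\<sigma> (skip j c)) else c)"
  have not_i: "\<sigma> (skip j c) \<noteq> i" for c
    using permutes_inj[OF sigma(1)] sigma(2) skip_neq(1)[of j c] by (metis inj_eq)
  have in_range: "\<sigma> (skip j c) < n" if "c < n-1" for c
    using permutes_in_image[OF sigma(1), of "skip j c"] that by (auto simp: skip_def)
  show skip_tau: "\<sigma> (skip j c) = skip i (\<tau> c)" if "c < n-1" for c
    using that not_i by (simp add: \<tau>_def skip_unskip)
  have "inj_on \<tau> {..<n-1}"
  proof (rule inj_onI)
    fix c c' assume "c \<in> {..<n-1}" "c' \<in> {..<n-1}" "\<tau> c = \<tau> c'"
    then have "\<sigma> (skip j c) = \<sigma> (skip j c')" using skip_tau by auto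
    then show "c = c'"
      using permutes_inj[OF sigma(1)] skip_inj[of j UNIV] by (metis inj_eq)
  qed
  moreover have "\<tau> ` {..<n-1} \<subseteq> {..<n-1}"
  proof (rule image_subsetI)
    fix c assume "c \<in> {..<n-1}"
    then show "\<tau> c \<in> {..<n-1}"
      using in_range[of c] not_i[of c] ij by (auto simp: \<tau>_def unskip_def)
  qed
  ultimately have "bij_betw \<tau> {..<n-1} {..<n-1}"
    by (simp add: bij_betw_def endo_inj_surj)
  then show "\<tau> permutes {..<n-1}"
    by (rule bij_imp_permutes) (simp add: \<tau>_def)
qed

lemma perm_of_minor_perm:
  assumes ij: "i < n" "j < n" and tau: "\<tau> permutes {..<n-1}"
  obtains \<sigma> where "\<sigma> permutes {..<n}" "\<sigma> j = i"
    "\<And>c. c < n-1 \<Longrightarrow> \<sigma> (skip j c) = skip i (\<tau> c)"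
proof -
  define \<sigma> where "\<sigma> = (\<lambda>r. if r < n then (if r = j then i else skip i (\<tau> (unskip j r))) else r)"
  have tau_lt: "c < n-1 \<Longrightarrow> \<tau> c < n-1" for c
    using permutes_in_image[OF tau] by auto
  have unskip_lt: "r < n \<Longrightarrow> r \<noteq> j \<Longrightarrow> unskip j r < n-1" for r
    using ij by (auto simp: unskip_def)
  have sigma_j: "\<sigma> j = i" using ij by (simp add: \<sigma>_def)
  have sigma_skip: "\<sigma> (skip j c) = skip i (\<tau> c)" if "c < n-1" for c
  proof -
    have "skip j c < n" using that by (auto simp: skip_def)
    then show ?thesis by (simp add: \<sigma>_def)
  qed
  have "inj_on \<sigma> {..<n}"
  proof (rule inj_onI)
    fix r r' assume r: "r \<in> {..<n}" "r' \<in> {..<n}" "\<sigma> r = \<sigma> r'"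
    show "r = r'"
    proof (cases "r = j \<or> r' = j")
      case True then show ?thesis
        using r by (auto simp: \<sigma>_def split: if_splits)
    next
      case False
      then have "skip i (\<tau> (unskip j r)) = skip i (\<tau> (unskip j r'))" using r by (simp add: \<sigma>_def)
      then have "unskip j r = unskip j r'"
        using skip_inj[of i UNIV] permutes_inj[OF tau] by (metis inj_eq)
      then show ?thesis using False by (metis skip_unskip)
    qed
  qed
  moreover have "\<sigma> ` {..<n} \<subseteq> {..<n}"
  proof (rule image_subsetI)
    fix r assume "r \<in> {..<n}"
    then show "\<sigma> r \<in> {..<n}"
      using ij tau_lt[OF unskip_lt[of r]] by (auto simp: \<sigma>_def skip_def)
  qed
  ultimately have "bij_betw \<sigma> {..<n} {..<n}"
    by (simp add: bij_betw_def endo_inj_surj)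
  then have "\<sigma> permutes {..<n}"
    by (rule bij_imp_permutes) (simp add: \<sigma>_def)
  then show ?thesis using that sigma_j sigma_skip by blast
qed

lemma minor_term_eq:
  assumes "j < n" "\<And>c. c < n-1 \<Longrightarrow> \<sigma> (skip j c) = skip i (\<tau> c)"
  shows "(\<Prod>r\<in>{..<n}-{j}. A r (\<sigma> r)) = (\<Prod>c<n-1. sminor A j i c (\<tau> c))"
  using assms by (simp add: prod_reindex_skip sminor_skip)

text \<open>Hence nu (adj A) i j is the maximum over permutations sigma with sigma j = i of the
  nu-value of the product of A r (sigma r) over all rows r other than j.\<close>

lemma adj_term_le:
  fixes A :: "'g::linordered_ab_group_add smat"
  assumes "i < n" "j < n" "\<sigma> permutes {..<n}" "\<sigma> j = i"
  shows "nu (\<Prod>r\<in>{..<n}-{j}. A r (\<sigma> r)) \<le> nu (sadj n A i j)"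
proof -
  obtain \<tau> where tau: "\<tau> permutes {..<n-1}" "\<And>c. c < n-1 \<Longrightarrow> \<sigma> (skip j c) = skip i (\<tau> c)"
    using minor_perm_of_perm[OF assms] by blast
  have "(\<Prod>r\<in>{..<n}-{j}. A r (\<sigma> r)) = (\<Prod>c<n-1. sminor A j i c (\<tau> c))"
    using assms(2) tau(2) by (rule minor_term_eq)
  moreover have "nu (\<Prod>c<n-1. sminor A j i c (\<tau> c)) \<le> nu (sadj n A i j)"
    unfolding sadj_def sdet_def
    by (rule nu_sum_ge[where f="\<lambda>\<tau>. \<Prod>c<n-1. sminor A j i c (\<tau> c)"])
      (use tau(1) in \<open>simp_all add: finite_permutations\<close>)
  ultimately show ?thesis by simp
qed

lemma adj_le_bound:
  fixes A :: "'g::linordered_ab_group_add smat"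
  assumes ij: "i < n" "j < n"
    and bound: "\<And>\<sigma>. \<sigma> permutes {..<n} \<Longrightarrow> \<sigma> j = i \<Longrightarrow> nu (\<Prod>r\<in>{..<n}-{j}. A r (\<sigma> r)) \<le> c"
  shows "nu (sadj n A i j) \<le> c"
  unfolding sadj_def sdet_def
proof (rule nu_sum_le)
  fix \<tau> assume "\<tau> \<in> {\<tau>. \<tau> permutes {..<n-1}}"
  then obtain \<sigma> where perm: "\<sigma> permutes {..<n}" "\<sigma> j = i"
    and skip: "\<And>c. c < n-1 \<Longrightarrow> \<sigma> (skip j c) = skip i (\<tau> c)"
    using perm_of_minor_perm[OF ij] by blast
  have "(\<Prod>r\<in>{..<n}-{j}. A r (\<sigma> r)) = (\<Prod>c<n-1. sminor A j i c (\<tau> c))"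
    using ij(2) skip by (rule minor_term_eq)
  then show "nu (\<Prod>c<n-1. sminor A j i c (\<tau> c)) \<le> c"
    using bound[OF perm] by simp
qed (simp add: finite_permutations)

section \<open>Cycles as permutations\<close>

lemma cycle_of_list_nth:
  assumes "distinct cs" "t < length cs"
  shows "cycle_of_list cs (cs ! t) = cs ! (Suc t mod length cs)"
proof -
  have "map (cycle_of_list cs ^^ 1) cs = rotate 1 cs" by (rule cyclic_rotation[OF assms(1)])
  then have "map (cycle_of_list cs) cs ! t = rotate1 cs ! t" by simp
  then show ?thesis using assms(2) by (simp add: nth_rotate1)
qed

lemma cycle_of_list_last:
  assumes "distinct cs" "cs \<noteq> []"
  shows "cycle_of_list cs (last cs) = hd cs"
  using cycle_of_list_nth[OF assms(1), of "length cs - 1"] assms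
  by (simp add: last_conv_nth hd_conv_nth)

lemma prod_cycle_of_list:
  "distinct cs \<Longrightarrow> cs \<noteq> [] \<Longrightarrow>
   (\<Prod>r\<in>set cs - {last cs}. A r (cycle_of_list cs r)) = walk_weight A cs"
proof (induction cs rule: cycle_of_list.induct)
  case (1 i j cs)
  let ?c = "cycle_of_list (j # cs)"
  have i_new: "i \<notin> set (j # cs)" and dist: "distinct (j # cs)" using 1 by auto
  have c_i: "cycle_of_list (i # j # cs) i = j"
    using i_new by (simp add: id_outside_supp)
  have c_r: "cycle_of_list (i # j # cs) r = ?c r" if r: "r \<in> set (j # cs) - {last (j # cs)}" for r
  proof -
    have "?c r \<in> set (j # cs)" using r permutes_in_image[OF cycle_permutes[of "j # cs"]] by auto
    moreover have "?c r \<noteq> j"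
    proof
      assume "?c r = j"
      then have "?c r = ?c (last (j # cs))" using cycle_of_list_last[OF dist] by simp
      then show False using r permutation_bijective[OF permutation_of_cycle[of "j # cs"]]
        by (metis DiffD2 bij_is_inj inj_eq singletonI)
    qed
    ultimately show ?thesis using i_new by (auto simp: transpose_def)
  qed
  have set_eq: "set (i # j # cs) - {last (i # j # cs)} = insert i (set (j # cs) - {last (j # cs)})"
    using i_new by auto
  have "(\<Prod>r\<in>set (i # j # cs) - {last (i # j # cs)}. A r (cycle_of_list (i # j # cs) r))
      = A i j * (\<Prod>r\<in>set (j # cs) - {last (j # cs)}. A r (?c r))"
    unfolding set_eq using i_new c_i c_r by (subst prod.insert) auto
  also have "\<dots> = A i j * walk_weight A (j # cs)" using 1 dist by simp
  finally show ?case by simp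
qed auto

lemma prod_fixed_rows:
  fixes A :: "'g::linordered_ab_group_add smat"
  assumes diag: "\<forall>r<n. A r r = 1" and S: "S \<subseteq> {..<n}" and fixed: "\<And>r. r \<notin> S \<Longrightarrow> f r = r"
    and T: "T \<subseteq> S"
  shows "(\<Prod>r\<in>{..<n} - T. A r (f r)) = (\<Prod>r\<in>S - T. A r (f r))"
proof -
  have "(\<Prod>r\<in>{..<n} - T. A r (f r)) = (\<Prod>r\<in>({..<n} - T) - (S - T). A r (f r)) * (\<Prod>r\<in>S - T. A r (f r))"
    using S by (intro prod.subset_diff) auto
  also have "(\<Prod>r\<in>({..<n} - T) - (S - T). A r (f r)) = 1"
  proof (rule prod.neutral, intro ballI)
    fix r assume "r \<in> ({..<n} - T) - (S - T)"
    then have "r < n" "r \<notin> S" using T by auto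
    then show "A r (f r) = 1" using diag fixed by simp
  qed
  finally show ?thesis by simp
qed

lemma cycle_perm_terms:
  fixes A :: "'g::linordered_ab_group_add smat"
  assumes diag: "\<forall>r<n. A r r = 1" and cs: "distinct cs" "cs \<noteq> []" "set cs \<subseteq> {..<n}"
  shows "(\<Prod>r\<in>{..<n} - {last cs}. A r (cycle_of_list cs r)) = walk_weight A cs"
    and "(\<Prod>r<n. A r (cycle_of_list cs r)) = walk_weight A (cs @ [hd cs])"
proof -
  have last_in: "last cs \<in> set cs" using cs by simp
  show path: "(\<Prod>r\<in>{..<n} - {last cs}. A r (cycle_of_list cs r)) = walk_weight A cs"
    using prod_fixed_rows[where A=A and n=n and f="cycle_of_list cs" and T="{last cs}", OF diag cs(3)] last_in
      id_outside_supp[of _ cs] prod_cycle_of_list[OF cs(1,2)] by auto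
  have "(\<Prod>r<n. A r (cycle_of_list cs r))
      = A (last cs) (cycle_of_list cs (last cs)) * (\<Prod>r\<in>{..<n} - {last cs}. A r (cycle_of_list cs r))"
    using last_in cs(3) by (subst prod.remove[of _ "last cs"]) auto
  also have "\<dots> = walk_weight A cs * A (last cs) (hd cs)"
    using path cycle_of_list_last[OF cs(1,2)] by (simp add: mult.commute)
  finally show "(\<Prod>r<n. A r (cycle_of_list cs r)) = walk_weight A (cs @ [hd cs])"
    using walk_weight_snoc[OF cs(2), of A "hd cs"] by simp
qed

lemma orbit_path:
  assumes S: "finite S" "\<sigma> permutes S" and j: "j \<in> S" "\<sigma> j = i"
  obtains vs where "distinct vs" "vs \<noteq> []" "set vs \<subseteq> S" "hd vs = i" "last vs = j"
    "\<And>r. r \<in> set vs \<Longrightarrow> \<sigma> r = cycle_of_list vs r"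
proof
  have perm: "permutation \<sigma>" using S permutation_permutes by blast
  define L where "L = least_power \<sigma> i"
  have L: "L > 0" "(\<sigma> ^^ L) i = i" using least_power_of_permutation[OF perm] by (auto simp: L_def)
  define vs where "vs = support \<sigma> i"
  show dist: "distinct vs" using cycle_of_permutation[OF perm] by (simp add: vs_def)
  have len: "length vs = L" by (simp add: vs_def L_def)
  have nth: "t < L \<Longrightarrow> vs ! t = (\<sigma> ^^ t) i" for t by (simp add: vs_def L_def)
  show ne: "vs \<noteq> []" using len L by auto
  have "i \<in> S" using permutes_in_image[OF S(2)] j by auto
  then show "set vs \<subseteq> S"
    using permutes_in_image[OF permutes_funpow[OF S(2)]] by (auto simp: vs_def)
  show "hd vs = i" using nth[of 0] L ne by (simp add: hd_conv_nth)
  have "\<sigma> ((\<sigma> ^^ (L - 1)) i) = \<sigma> j"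
    using L j(2) by (metis Suc_diff_1 funpow.simps(2) o_apply)
  then show "last vs = j"
    using nth[of "L - 1"] L ne len permutes_inj[OF S(2)] by (simp add: last_conv_nth inj_eq)
  show "\<sigma> r = cycle_of_list vs r" if r_in: "r \<in> set vs" for r
  proof -
    obtain t where t: "t < L" "r = vs ! t" using r_in len by (auto simp: in_set_conv_nth)
    have "cycle_of_list vs r = vs ! (Suc t mod L)"
      using cycle_of_list_nth[OF dist, of t] t len by simp
    moreover have "\<sigma> r = (\<sigma> ^^ Suc t) i" using t nth by simp
    moreover have "(\<sigma> ^^ Suc t) i = vs ! (Suc t mod L)"
    proof (cases "Suc t < L")
      case True then show ?thesis using nth[of "Suc t"] by simp
    next
      case False
      then have "Suc t = L" using t by simp
      then show ?thesis using nth[of 0] L by simp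
    qed
    ultimately show ?thesis by simp
  qed
qed

lemma split_off_cycle:
  assumes sigma: "\<sigma> permutes S" and cs: "distinct cs" "set cs \<subseteq> S"
    and agree: "\<And>r. r \<in> set cs \<Longrightarrow> \<sigma> r = cycle_of_list cs r"
  obtains \<sigma>' where "\<sigma>' permutes S" "\<And>r. r \<in> set cs \<Longrightarrow> \<sigma>' r = r"
    "\<And>r. r \<notin> set cs \<Longrightarrow> \<sigma>' r = \<sigma> r"
proof
  let ?c = "cycle_of_list cs"
  have c_perm: "?c permutes set cs" by (rule cycle_permutes)
  show "\<sigma> \<circ> inv ?c permutes S"
    by (rule permutes_compose[OF permutes_inv[OF permutes_subset[OF c_perm cs(2)]] sigma])
  show "(\<sigma> \<circ> inv ?c) r = r" if "r \<in> set cs" for r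
    using agree[of "inv ?c r"] permutes_in_image[OF permutes_inv[OF c_perm]] that
      permutes_inverses(1)[OF c_perm] by simp
  show "(\<sigma> \<circ> inv ?c) r = \<sigma> r" if "r \<notin> set cs" for r
    using permutes_not_in[OF permutes_inv[OF c_perm] that] by simp
qed

section \<open>Matrices with unit diagonal and nonpositive permutation terms\<close>

context
  fixes A :: "'g::linordered_ab_group_add smat" and n :: nat
  assumes diag: "\<forall>r<n. A r r = 1"
    and perm_le: "\<And>\<sigma>. \<sigma> permutes {..<n} \<Longrightarrow> nu (\<Prod>r<n. A r (\<sigma> r)) \<le> Some 0"
begin

text \<open>A simple path from i to j extends to a permutation sigma with sigma j = i.\<close>
lemma path_le_adj:
  assumes vs: "distinct vs" "vs \<noteq> []" "set vs \<subseteq> {..<n}"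
  shows "nu (walk_weight A vs) \<le> nu (sadj n A (hd vs) (last vs))"
proof -
  have ends: "hd vs < n" "last vs < n"
    using vs(3) hd_in_set[OF vs(2)] last_in_set[OF vs(2)] by auto
  have "nu (\<Prod>r\<in>{..<n} - {last vs}. A r (cycle_of_list vs r)) \<le> nu (sadj n A (hd vs) (last vs))"
    by (rule adj_term_le[OF ends permutes_subset[OF cycle_permutes vs(3)] cycle_of_list_last[OF vs(1,2)]])
  then show ?thesis using cycle_perm_terms(1)[where A=A and n=n, OF diag vs] by simp
qed

text \<open>A simple cycle extends by the identity to a permutation, so its weight is at most 0.\<close>
lemma cycle_le_one:
  assumes cs: "distinct cs" "cs \<noteq> []" "set cs \<subseteq> {..<n}"
  shows "nu (walk_weight A (cs @ [hd cs])) \<le> Some 0"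
  using perm_le[OF permutes_subset[OF cycle_permutes cs(3)]] cycle_perm_terms(2)[where A=A and n=n, OF diag cs]
  by simp

text \<open>Every closed walk has nu-weight at most 0: cut it at a repeated vertex into two
  shorter closed walks until it is a simple cycle.\<close>
lemma closed_walk_le_one:
  "vs \<noteq> [] \<Longrightarrow> set vs \<subseteq> {..<n} \<Longrightarrow> hd vs = last vs \<Longrightarrow> nu (walk_weight A vs) \<le> Some 0"
proof (induction "length vs" arbitrary: vs rule: less_induct)
  case less
  obtain cs x where vs: "vs = cs @ [x]" using less.prems(1) by (metis rev_exhaust)
  show ?case
  proof (cases "distinct cs")
    case True
    show ?thesis
    proof (cases "cs = []")
      case True then show ?thesis by (simp add: vs)
    next
      case False
      then have "vs = cs @ [hd cs]" using vs less.prems(3) by simp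
      then show ?thesis using cycle_le_one[OF \<open>distinct cs\<close> False] less.prems(2) by auto
    qed
  next
    case False
    then obtain xs y ys zs where cs: "cs = xs @ [y] @ ys @ [y] @ zs"
      using not_distinct_decomp by blast
    define W where "W = xs @ [y] @ zs @ [x]"
    define C where "C = y # ys @ [y]"
    have split: "walk_weight A vs = walk_weight A W * walk_weight A C"
      using walk_weight_cut[of A xs y ys "zs @ [x]"] by (simp add: vs cs W_def C_def)
    have W: "nu (walk_weight A W) \<le> Some 0"
      by (rule less.hyps) (use less.prems in \<open>auto simp: W_def vs cs hd_append\<close>)
    have C: "nu (walk_weight A C) \<le> Some 0"
      by (rule less.hyps) (use less.prems in \<open>auto simp: C_def vs cs\<close>)
    show ?thesis
      using order_trans[OF nu_mult_le_left[OF C] W] by (simp add: split nu_times)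
  qed
qed

text \<open>Every walk is bounded by the adjugate entry of its endpoints: cut off closed
  subwalks until a simple path remains.\<close>
lemma walk_le_adj:
  "vs \<noteq> [] \<Longrightarrow> set vs \<subseteq> {..<n} \<Longrightarrow> nu (walk_weight A vs) \<le> nu (sadj n A (hd vs) (last vs))"
proof (induction "length vs" arbitrary: vs rule: less_induct)
  case less
  show ?case
  proof (cases "distinct vs")
    case True then show ?thesis using path_le_adj less.prems by blast
  next
    case False
    then obtain xs y ys zs where vs: "vs = xs @ [y] @ ys @ [y] @ zs"
      using not_distinct_decomp by blast
    define W where "W = xs @ [y] @ zs"
    have ends: "hd W = hd vs" "last W = last vs"
      by (auto simp: W_def vs hd_append last_append)
    have W: "nu (walk_weight A W) \<le> nu (sadj n A (hd W) (last W))"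
      by (rule less.hyps) (use less.prems in \<open>auto simp: W_def vs\<close>)
    have C: "nu (walk_weight A (y # ys @ [y])) \<le> Some 0"
      by (rule closed_walk_le_one) (use less.prems in \<open>auto simp: vs\<close>)
    have "walk_weight A vs = walk_weight A W * walk_weight A (y # ys @ [y])"
      unfolding vs W_def by (rule walk_weight_cut)
    then have "nu (walk_weight A vs) \<le> nu (walk_weight A W)"
      using nu_mult_le_left[OF C] by (simp add: nu_times)
    then show ?thesis using W ends by simp
  qed
qed

lemma pow_le_adj:
  assumes "i < n" "j < n"
  shows "nu (smat_pow n A k i j) \<le> nu (sadj n A i j)"
  using pow_entry_le_walk[OF assms, of A k] walk_le_adj by fastforce

text \<open>Conversely each adjugate term factors into the weight of the orbit path from i to j,
  bounded by A^(n-1), and a permutation term, bounded by 0.\<close>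
lemma adj_term_le_pow:
  assumes ij: "i < n" "j < n" and sigma: "\<sigma> permutes {..<n}" "\<sigma> j = i"
  shows "nu (\<Prod>r\<in>{..<n}-{j}. A r (\<sigma> r)) \<le> nu (smat_pow n A (n - 1) i j)"
proof -
  obtain vs where vs: "distinct vs" "vs \<noteq> []" "set vs \<subseteq> {..<n}" "hd vs = i" "last vs = j"
    and agree: "\<And>r. r \<in> set vs \<Longrightarrow> \<sigma> r = cycle_of_list vs r"
    using orbit_path[of "{..<n}" \<sigma> j i] sigma ij by auto
  obtain \<sigma>' where sigma': "\<sigma>' permutes {..<n}" "\<And>r. r \<in> set vs \<Longrightarrow> \<sigma>' r = r"
    and outside: "\<And>r. r \<notin> set vs \<Longrightarrow> \<sigma>' r = \<sigma> r"
    using split_off_cycle[OF sigma(1) vs(1,3) agree] by blast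
  define R where "R = (\<Prod>r\<in>{..<n} - set vs. A r (\<sigma> r))"
  have fixed: "\<sigma>' r = r" if "r \<notin> {..<n} - set vs" for r
    using that sigma'(2) permutes_not_in[OF sigma'(1)] by auto
  have "(\<Prod>r<n. A r (\<sigma>' r)) = (\<Prod>r\<in>{..<n} - set vs. A r (\<sigma>' r))"
    using prod_fixed_rows[where A=A and n=n and S="{..<n} - set vs" and T="{}", OF diag _ fixed] by simp
  also have "\<dots> = R" unfolding R_def using outside by (intro prod.cong) auto
  finally have R: "nu R \<le> Some 0" using perm_le[OF sigma'(1)] by simp
  have j_in: "j \<in> set vs" using vs(2,5) last_in_set by blast
  have rows: "{..<n} - {j} = ({..<n} - set vs) \<union> (set vs - {j})" using vs(3) j_in by auto
  have "(\<Prod>r\<in>{..<n}-{j}. A r (\<sigma> r)) = R * (\<Prod>r\<in>set vs - {j}. A r (\<sigma> r))"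
    unfolding rows R_def by (rule prod.union_disjoint) auto
  also have "(\<Prod>r\<in>set vs - {j}. A r (\<sigma> r)) = walk_weight A vs"
    using prod_cycle_of_list[OF vs(1,2)] agree vs(5) by simp
  finally have "nu (\<Prod>r\<in>{..<n}-{j}. A r (\<sigma> r)) \<le> nu (walk_weight A vs)"
    using nu_mult_le_left[OF R] by (simp add: mult.commute[of R] nu_times)
  also have "\<dots> \<le> nu (smat_pow n A (length vs - 1) i j)"
    using walk_weight_le_pow[OF vs(2,3), of A] vs(4,5) by simp
  also have "\<dots> \<le> nu (smat_pow n A (n - 1) i j)"
  proof (rule pow_entry_mono[where A=A and n=n, OF diag ij])
    show "length vs - 1 \<le> n - 1"
      using card_mono[OF _ vs(3)] distinct_card[OF vs(1)] by simp
  qed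
  finally show ?thesis .
qed

lemma pow_eq_adj:
  assumes ij: "i < n" "j < n" and k: "n - 1 \<le> k"
  shows "nu (smat_pow n A k i j) = nu (sadj n A i j)"
proof (rule antisym)
  show "nu (smat_pow n A k i j) \<le> nu (sadj n A i j)" by (rule pow_le_adj[OF ij])
  have "nu (sadj n A i j) \<le> nu (smat_pow n A (n - 1) i j)"
    by (rule adj_le_bound[OF ij adj_term_le_pow[OF ij]])
  also have "\<dots> \<le> nu (smat_pow n A k i j)" by (rule pow_entry_mono[where A=A and n=n, OF diag ij k])
  finally show "nu (sadj n A i j) \<le> nu (smat_pow n A k i j)" .
qed

end

lemma perm_term_le_det:
  fixes A :: "'g::linordered_ab_group_add smat"
  assumes "\<sigma> permutes {..<n}"
  shows "nu (\<Prod>r<n. A r (\<sigma> r)) \<le> nu (sdet n A)"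
  unfolding sdet_def
  by (rule nu_sum_ge[where f="\<lambda>\<sigma>. \<Prod>r<n. A r (\<sigma> r)"]) (simp_all add: finite_permutations assms)

lemma snabla_det_one:
  assumes "sdet n A = 1"
  shows "snabla n A = sadj n A"
proof -
  have "st_inv (sdet n A) = 1" using assms by (simp add: one_st_def)
  then show ?thesis by (simp add: snabla_def)
qed

theorem proposition3p7:
  fixes A :: "'g::linordered_ab_group_add smat" and n :: nat
  assumes "definite n A"
  shows "nu_equiv n (snabla n A) (kleene_star n A)
       \<and> nu_equiv n (kleene_star n A) (smat_pow n A (n - 1))"
proof -
  have diag: "\<forall>r<n. A r r = 1" and det: "sdet n A = 1"
    using assms by (auto simp: definite_def)
  have perm_le: "nu (\<Prod>r<n. A r (\<sigma> r)) \<le> Some 0" if "\<sigma> permutes {..<n}" for \<sigma>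
    using perm_term_le_det[OF that, of A] det by simp
  have "nu (snabla n A i j) = nu (kleene_star n A i j)
      \<and> nu (kleene_star n A i j) = nu (smat_pow n A (n - 1) i j)" if ij: "i < n" "j < n" for i j
  proof -
    let ?v = "nu (sadj n A i j)"
    have stable: "nu (smat_pow n A k i j) = ?v" if "n - 1 \<le> k" for k
      using pow_eq_adj[where A=A and n=n, OF diag perm_le ij that] .
    have "kleene_star n A i j = ghost_of ?v"
    proof (rule kleene_star_entry_eq)
      show "(\<Sum>k<m. smat_pow n A k i j) = ghost_of ?v" if "n + 1 \<le> m" for m
        by (rule sum_eventually_ghost[of "n - 1"])
          (use that ij stable pow_le_adj[where A=A and n=n, OF diag perm_le ij] in auto)
    qed
    then show ?thesis using snabla_det_one[OF det] stable[of "n - 1"] by simp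
  qed
  then show ?thesis by (simp add: nu_equiv_def)
qed

end
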